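(* Let $B',B''\subseteq\widetilde\Sigma^*\setminus\mathring\Sigma^+$ be bases in decomposed form, $B'$ with scaffold $sc'$ and fill $fl'$, $B''$ with scaffold $sc''$ and fill $fl''$. If $B'$ and $B''$ are joinable, then $\mathcal{C}(B')\cup\mathcal{C}(B'')=\mathcal{C}(B'\cup B'')$.
   Context: $\Sigma$ is a finite alphabet, $\mathring\Sigma=\{\mathring a\mid a\in\Sigma\}$ a disjoint ("dotted") copy, and $\widetilde\Sigma=\Sigma\cup\mathring\Sigma$. The match operation $@$ on letters is: $a@\mathring a=\mathring a@a=a$, $\mathring a@\mathring a=\mathring a$ for $a\in\Sigma$, undefined otherwise. For words $w,w'\in\widetilde\Sigma^n$, $w@w'=(w(1)@w'(1))\cdots(w(n)@w'(n))$ if every letterwise match is defined ($\epsilon@\epsilon=\epsilon$); otherwise (including unequal lengths) undefined. For languages, $B_1@B_2=\{w_1@w_2\mid w_1\in B_1,w_2\in B_2, w_1@w_2\text{ defined}\}$. Define $B^{0@}=B$, $B^{i@}=B^{(i-1)@}@B$, $B^@=\bigcup_{i\ge0}B^{i@}$, and $\mathcal{C}(B)=B^@\cap\Sigma^*$. $B$ is unproductive if $\mathcal{C}(B)=\emptyset$; $(B_1,B_2)$ is unmatchable if $B_1@B_2=\emptyset$. A base $B\subseteq\widetilde\Sigma^*\setminus\mathring\Sigma^+$ is in decomposed form with scaffold $sc$ and fill $fl$ if $B$ is the disjoint union of $sc$ and $fl$, $fl$ is unproductive and $(sc,sc)$ is unmatchable. Two decomposed bases $B',B''$ (scaffolds $sc',sc''$,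 fills $fl',fl''$) are joinable if $B'\cup B''$ is in decomposed form with scaffold $sc'\cup sc''$ and fill $fl'\cup fl''$, and the pairs $(sc',fl'')$ and $(sc'',fl')$ are unmatchable. *)

theory Defs
  imports Main
begin

datatype 'a tletter = Plain 'a | Dot 'a

fun lmatch :: "'a tletter \<Rightarrow> 'a tletter \<Rightarrow> 'a tletter option" where
  "lmatch (Plain a) (Dot b) = (if a = b then Some (Plain a) else None)"
| "lmatch (Dot a) (Plain b) = (if a = b then Some (Plain a) else None)"
| "lmatch (Dot a) (Dot b) = (if a = b then Some (Dot a) else None)"
| "lmatch (Plain a) (Plain b) = None"

fun wmatch :: "'a tletter list \<Rightarrow> 'a tletter list \<Rightarrow> 'a tletter list option" where
  "wmatch [] [] = Some []"
| "wmatch (x # xs) (y # ys) =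
     (case lmatch x y of None \<Rightarrow> None
      | Some z \<Rightarrow> (case wmatch xs ys of None \<Rightarrow> None | Some zs \<Rightarrow> Some (z # zs)))"
| "wmatch _ _ = None"

definition lang_match :: "'a tletter list set \<Rightarrow> 'a tletter list set \<Rightarrow> 'a tletter list set" where
  "lang_match B1 B2 = {w. \<exists>w1\<in>B1. \<exists>w2\<in>B2. wmatch w1 w2 = Some w}"

fun match_pow :: "'a tletter list set \<Rightarrow> nat \<Rightarrow> 'a tletter list set" where
  "match_pow B 0 = B"
| "match_pow B (Suc i) = lang_match (match_pow B i) B"

definition match_star :: "'a tletter list set \<Rightarrow> 'a tletter list set" where
  "match_star B = (\<Union>i. match_pow B i)"

definition plain_words :: "'a tletter list set" where
  "plain_words = {w. \<forall>x\<in>set w. \<exists>a. x = Plain a}"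

definition dotted_plus :: "'a tletter list set" where
  "dotted_plus = {w. w \<noteq> [] \<and> (\<forall>x\<in>set w. \<exists>a. x = Dot a)}"

definition compl :: "'a tletter list set \<Rightarrow> 'a tletter list set" ("\<C>") where
  "compl B = match_star B \<inter> plain_words"

definition unproductive :: "'a tletter list set \<Rightarrow> bool" where
  "unproductive B \<longleftrightarrow> compl B = {}"

definition unmatchable :: "'a tletter list set \<Rightarrow> 'a tletter list set \<Rightarrow> bool" where
  "unmatchable B1 B2 \<longleftrightarrow> lang_match B1 B2 = {}"

definition decomposed :: "'a tletter list set \<Rightarrow> 'a tletter list set \<Rightarrow> 'a tletter list set \<Rightarrow> bool" where
  "decomposed B sc fl \<longleftrightarrow>
     B \<inter> dotted_plus = {} \<and> B = sc \<union> fl \<and> sc \<inter> fl = {} \<and>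
     unproductive fl \<and> unmatchable sc sc"

definition joinable ::
  "'a tletter list set \<Rightarrow> 'a tletter list set \<Rightarrow> 'a tletter list set \<Rightarrow>
   'a tletter list set \<Rightarrow> 'a tletter list set \<Rightarrow> 'a tletter list set \<Rightarrow> bool" where
  "joinable B' sc' fl' B'' sc'' fl'' \<longleftrightarrow>
     decomposed (B' \<union> B'') (sc' \<union> sc'') (fl' \<union> fl'') \<and>
     unmatchable sc' fl'' \<and> unmatchable sc'' fl'"

end

theory Submission
  imports Defs
begin

text \<open>Order words letterwise by letting a dotted letter lie below its plain version. A match
  dominates both its arguments, and matchability is inherited downwards. Hence a word of
  \<open>(B' \<union> B'')\<^sup>@\<close> lying above a scaffold word \<open>s\<close> of \<open>sc'\<close> can only be extended by words matchable
  with \<open>s\<close>, i.e. by words of \<open>fl'\<close>, and stays in \<open>B'\<^sup>@\<close>; a word built from fills alone, once it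
  meets a scaffold word of \<open>sc'\<close>, cannot lie above any word of \<open>fl''\<close> and so came from \<open>fl'\<^sup>@\<close>.
  Every word of \<open>(B' \<union> B'')\<^sup>@\<close> therefore lies in \<open>B'\<^sup>@\<close>, in \<open>B''\<^sup>@\<close>, or in the unproductive
  \<open>(fl' \<union> fl'')\<^sup>@\<close>.\<close>

definition letter_le :: "'a tletter \<Rightarrow> 'a tletter \<Rightarrow> bool" where
  "letter_le x y \<longleftrightarrow> x = y \<or> (\<exists>a. x = Dot a \<and> y = Plain a)"

definition word_le :: "'a tletter list \<Rightarrow> 'a tletter list \<Rightarrow> bool" where
  "word_le v w \<longleftrightarrow> list_all2 letter_le v w"

lemma word_le_refl: "word_le w w"
  by (simp add: word_le_def letter_le_def list_all2_refl)

lemma word_le_trans: "word_le u v \<Longrightarrow> word_le v w \<Longrightarrow> word_le u w"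
  unfolding word_le_def
  by (rule list_all2_trans[of letter_le letter_le letter_le]) (auto simp: letter_le_def)

lemma lmatch_commute: "lmatch x y = lmatch y x"
  by (cases x; cases y) auto

lemma wmatch_commute: "wmatch v w = wmatch w v"
  by (induction v w rule: wmatch.induct) (auto simp: lmatch_commute split: option.splits)

lemma lang_match_commute: "lang_match A C = lang_match C A"
  by (auto simp: lang_match_def) (metis wmatch_commute)+

lemma unmatchable_commute: "unmatchable A C \<longleftrightarrow> unmatchable C A"
  by (simp add: unmatchable_def lang_match_commute)

lemma letter_le_lmatch: "lmatch x y = Some z \<Longrightarrow> letter_le x z \<and> letter_le y z"
  by (cases x; cases y) (auto simp: letter_le_def split: if_splits)

lemma word_le_wmatch: "wmatch v w = Some z \<Longrightarrow> word_le v z \<and> word_le w z"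
proof (induction v w arbitrary: z rule: wmatch.induct)
  case (2 x xs y ys)
  then show ?case using letter_le_lmatch by (auto simp: word_le_def split: option.splits)
qed (auto simp: word_le_def)

lemma lmatch_defined_if_le: "letter_le x y \<Longrightarrow> lmatch y c \<noteq> None \<Longrightarrow> lmatch x c \<noteq> None"
  by (cases x; cases y; cases c) (auto simp: letter_le_def split: if_splits)

lemma wmatch_defined_if_le: "word_le v w \<Longrightarrow> wmatch w c \<noteq> None \<Longrightarrow> wmatch v c \<noteq> None"
  unfolding word_le_def
proof (induction v w arbitrary: c rule: list_all2_induct)
  case Nil
  then show ?case by (cases c) auto
next
  case (Cons x xs y ys)
  then obtain d ds where c: "c = d # ds" and "lmatch y d \<noteq> None" "wmatch ys ds \<noteq> None"
    by (cases c) (auto split: option.splits)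
  then have "lmatch x d \<noteq> None" "wmatch xs ds \<noteq> None"
    using lmatch_defined_if_le Cons by blast+
  then show ?case
    using c by (auto split: option.splits)
qed

lemma wmatch_None_above_unmatchable:
  assumes "unmatchable S C" "s \<in> S" "word_le s u" "c \<in> C"
  shows "wmatch u c = None"
proof (rule ccontr)
  assume "wmatch u c \<noteq> None"
  then obtain z where "wmatch s c = Some z"
    using wmatch_defined_if_le[OF assms(3)] by blast
  with assms(1,2,4) show False
    by (auto simp: unmatchable_def lang_match_def)
qed

lemma match_pow_mono: "X \<subseteq> Y \<Longrightarrow> match_pow X i \<subseteq> match_pow Y i"
  by (induction i) (auto simp: lang_match_def)

lemma match_pow_Un_cases:
  "w \<in> match_pow (X \<union> Y) i \<Longrightarrow> w \<in> match_pow X i \<or> (\<exists>y\<in>Y. word_le y w)"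
proof (induction i arbitrary: w)
  case 0
  then show ?case using word_le_refl by auto
next
  case (Suc i)
  from Suc.prems obtain u b where u: "u \<in> match_pow (X \<union> Y) i" and b: "b \<in> X \<union> Y"
    and w: "wmatch u b = Some w"
    by (auto simp: lang_match_def)
  have le: "word_le u w" "word_le b w"
    using word_le_wmatch[OF w] by auto
  from Suc.IH[OF u] show ?case
  proof
    assume "u \<in> match_pow X i"
    then show ?thesis
      using b w le(2) by (auto simp: lang_match_def)
  next
    assume "\<exists>y\<in>Y. word_le y u"
    then show ?thesis
      using word_le_trans[OF _ le(1)] by blast
  qed
qed

lemma anchored_match_step:
  assumes "unmatchable (S1 \<union> S2) (S1 \<union> S2)" "unmatchable S1 F2"
    and "u \<in> match_pow (S1 \<union> F1) i" "s \<in> S1" "word_le s u"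
    and "b \<in> S1 \<union> F1 \<union> S2 \<union> F2" "wmatch u b = Some w"
  shows "w \<in> match_pow (S1 \<union> F1) (Suc i) \<and> word_le s w"
proof -
  have "b \<notin> S1 \<union> S2" "b \<notin> F2"
    using wmatch_None_above_unmatchable[of _ _ s u b] assms by auto
  with assms have "b \<in> F1" by blast
  moreover have "word_le s w"
    using word_le_trans[OF assms(5)] word_le_wmatch[OF assms(7)] by blast
  ultimately show ?thesis
    using assms(3,7) by (auto simp: lang_match_def)
qed

lemma fill_match_step:
  assumes "unmatchable S1 F2"
    and "u \<in> match_pow (F1 \<union> F2) i" "s \<in> S1" "wmatch u s = Some w"
  shows "w \<in> match_pow (S1 \<union> F1) (Suc i) \<and> word_le s w"
proof -
  have "unmatchable F2 S1"
    using assms(1) unmatchable_commute by blast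
  then have "\<not> (\<exists>f\<in>F2. word_le f u)"
    using wmatch_None_above_unmatchable[of F2 S1 _ u s] assms(3,4) by auto
  then have "u \<in> match_pow F1 i"
    using match_pow_Un_cases[OF assms(2)] by blast
  then show ?thesis
    using match_pow_mono[of F1 "S1 \<union> F1" i] assms(3,4) word_le_wmatch
    by (auto simp: lang_match_def)
qed

lemma match_pow_joined_cases:
  assumes usc: "unmatchable (S1 \<union> S2) (S1 \<union> S2)"
    and u1: "unmatchable S1 F2" and u2: "unmatchable S2 F1"
    and "w \<in> match_pow (S1 \<union> F1 \<union> (S2 \<union> F2)) i"
  shows "w \<in> match_pow (F1 \<union> F2) i
    \<or> (w \<in> match_pow (S1 \<union> F1) i \<and> (\<exists>s\<in>S1. word_le s w))
    \<or> (w \<in> match_pow (S2 \<union> F2) i \<and> (\<exists>s\<in>S2. word_le s w))"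
  using assms(4)
proof (induction i arbitrary: w)
  case 0
  then show ?case using word_le_refl by auto
next
  case (Suc i)
  from Suc.prems obtain u b where u: "u \<in> match_pow (S1 \<union> F1 \<union> (S2 \<union> F2)) i"
    and b: "b \<in> S1 \<union> F1 \<union> (S2 \<union> F2)" and w: "wmatch u b = Some w"
    by (auto simp: lang_match_def)
  have usc': "unmatchable (S2 \<union> S1) (S2 \<union> S1)"
    using usc by (simp add: Un_commute)
  have b1: "b \<in> S1 \<union> F1 \<union> S2 \<union> F2" and b2: "b \<in> S2 \<union> F2 \<union> S1 \<union> F1"
    using b by blast+
  from Suc.IH[OF u] consider
      (fill) "u \<in> match_pow (F1 \<union> F2) i"
    | (left) s where "u \<in> match_pow (S1 \<union> F1) i" "s \<in> S1" "word_le s u"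
    | (right) s where "u \<in> match_pow (S2 \<union> F2) i" "s \<in> S2" "word_le s u"
    by blast
  then show ?case
  proof cases
    case fill
    have fill': "u \<in> match_pow (F2 \<union> F1) i"
      using fill by (simp add: Un_commute)
    consider (fills) "b \<in> F1 \<union> F2" | (left) "b \<in> S1" | (right) "b \<in> S2"
      using b by blast
    then show ?thesis
    proof cases
      case fills
      then have "w \<in> match_pow (F1 \<union> F2) (Suc i)"
        using fill w by (auto simp: lang_match_def)
      then show ?thesis by blast
    next
      case left
      then show ?thesis using fill_match_step[OF u1 fill left w] by blast
    next
      case right
      then show ?thesis using fill_match_step[OF u2 fill' right w] by blast
    qed
  next
    case left
    then show ?thesis using anchored_match_step[OF usc u1 left b1 w] left(2) by blast
  next
    case right
    then show ?thesis using anchored_match_step[OF usc' u2 right b2 w] right(2) by blast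
  qed
qed

lemma compl_mono:
  assumes "X \<subseteq> Y"
  shows "\<C> X \<subseteq> \<C> Y"
  unfolding compl_def match_star_def using match_pow_mono[OF assms] by blast

lemma compl_joined_subset:
  assumes "unmatchable (S1 \<union> S2) (S1 \<union> S2)"
    and "unmatchable S1 F2" "unmatchable S2 F1"
    and "unproductive (F1 \<union> F2)"
  shows "\<C> (S1 \<union> F1 \<union> (S2 \<union> F2)) \<subseteq> \<C> (S1 \<union> F1) \<union> \<C> (S2 \<union> F2)"
proof
  fix w
  assume "w \<in> \<C> (S1 \<union> F1 \<union> (S2 \<union> F2))"
  then obtain i where i: "w \<in> match_pow (S1 \<union> F1 \<union> (S2 \<union> F2)) i" and p: "w \<in> plain_words"
    by (auto simp: compl_def match_star_def)
  have "w \<notin> match_pow (F1 \<union> F2) i"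
    using assms(4) p unfolding unproductive_def compl_def match_star_def by blast
  then have "w \<in> match_pow (S1 \<union> F1) i \<or> w \<in> match_pow (S2 \<union> F2) i"
    using match_pow_joined_cases[OF assms(1-3) i] by blast
  then show "w \<in> \<C> (S1 \<union> F1) \<union> \<C> (S2 \<union> F2)"
    using p unfolding compl_def match_star_def by blast
qed

theorem theorem1:
  fixes B' sc' fl' B'' sc'' fl'' :: "('a::finite) tletter list set"
  assumes "decomposed B' sc' fl'"
    and "decomposed B'' sc'' fl''"
    and "joinable B' sc' fl' B'' sc'' fl''"
  shows "\<C> B' \<union> \<C> B'' = \<C> (B' \<union> B'')"
proof
  show "\<C> B' \<union> \<C> B'' \<subseteq> \<C> (B' \<union> B'')"
    using compl_mono[of B' "B' \<union> B''"] compl_mono[of B'' "B' \<union> B''"] by blast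
  have B': "B' = sc' \<union> fl'" and B'': "B'' = sc'' \<union> fl''"
    using assms(1,2) by (auto simp: decomposed_def)
  have "unmatchable (sc' \<union> sc'') (sc' \<union> sc'')" "unmatchable sc' fl''" "unmatchable sc'' fl'"
    "unproductive (fl' \<union> fl'')"
    using assms(3) by (auto simp: joinable_def decomposed_def)
  then show "\<C> (B' \<union> B'') \<subseteq> \<C> B' \<union> \<C> B''"
    unfolding B' B'' by (rule compl_joined_subset)
qed

end
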